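(* Let $B$ be a finite Blaschke product of degree $n\ge1$ and $\lambda\in\mathbb T$. Then the equation $zB(z)=\lambda$ has exactly $n+1$ distinct solutions $z_0,\dots,z_n$, all lying on $\mathbb T$, and \[ \sum_{j=0}^n\frac{1}{|B'(z_j)|+1}=1 . \]
   Context: A finite Blaschke product of degree $n$ is $B(z)=\alpha\prod_{k=1}^n \frac{z-a_k}{1-\overline{a_k}z}$ with $a_k\in\mathbb D=\{|z|<1\}$, $\alpha\in\mathbb T=\{|z|=1\}$. *)

theory Defs
  imports "HOL-Analysis.Analysis"
begin

text \<open>Finite Blaschke product with unimodular constant \<alpha> and zeros given by the list as
  (listed with multiplicity; the degree is the length of the list):
  B(z) = \<alpha> * prod_k (z - a_k) / (1 - conj(a_k) z).\<close>
definition blaschke :: "complex \<Rightarrow> complex list \<Rightarrow> complex \<Rightarrow> complex" where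
  "blaschke \<alpha> as z = \<alpha> * (\<Prod>a\<leftarrow>as. (z - a) / (1 - cnj a * z))"

end

theory Submission
  imports Defs "HOL-Computational_Algebra.Fundamental_Theorem_Algebra"
begin

text \<open>Write \<open>B = \<alpha> P / Q\<close> with \<open>P(z) = \<Prod>(z - a)\<close> and \<open>Q(z) = \<Prod>(1 - cnj a \<cdot> z)\<close>. The solutions of
  \<open>z B(z) = \<lambda>\<close> are the roots of \<open>R = \<alpha> z P - \<lambda> Q\<close>, a polynomial of degree \<open>n + 1\<close>. Since
  \<open>|B| \<le> 1\<close> on the closed disc and \<open>|B| \<ge> 1\<close> outside it, every solution lies on the unit circle,
  where \<open>z B'(z) / B(z) = \<Sum> (1 - |a|\<^sup>2) / |z - a|\<^sup>2\<close> is real and non-negative. Hence \<open>|B'(z)|\<close>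
  equals this sum and \<open>z R'(z) = \<lambda> Q(z) (1 + |B'(z)|) \<noteq> 0\<close>, so the \<open>n + 1\<close> roots are simple.
  Finally \<open>\<Sum> T(w) / p'(w)\<close> over the roots of a squarefree \<open>p\<close> vanishes when
  \<open>deg T < deg p - 1\<close>; for \<open>p = z R\<close> and \<open>T = \<lambda> Q\<close> the root \<open>0\<close> contributes \<open>-1\<close> and each
  root \<open>w\<close> of \<open>R\<close> contributes \<open>1 / (1 + |B'(w)|)\<close>.\<close>

section \<open>Sums over the roots of a squarefree polynomial\<close>

lemma poly_pderiv_prod_linear_at_root:
  fixes Z :: "complex set"
  assumes "finite Z" "z \<in> Z"
  shows "poly (pderiv (\<Prod>w\<in>Z. [:-w, 1:])) z = (\<Prod>w\<in>Z - {z}. z - w)"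
proof -
  have "poly (pderiv (\<Prod>w\<in>Z. [:-w, 1:])) z = (\<Sum>a\<in>Z. \<Prod>w\<in>Z - {a}. z - w)"
    by (simp add: pderiv_prod poly_sum poly_prod pderiv_pCons)
  also have "\<dots> = (\<Prod>w\<in>Z - {z}. z - w) + (\<Sum>a\<in>Z - {z}. \<Prod>w\<in>Z - {a}. z - w)"
    by (rule sum.remove[OF assms])
  also have "(\<Sum>a\<in>Z - {z}. \<Prod>w\<in>Z - {a}. z - w) = 0"
    using assms by (intro sum.neutral ballI prod_zero) auto
  finally show ?thesis by simp
qed

text \<open>Lagrange interpolation of \<open>T\<close> at the points of \<open>Z\<close>, compared in the coefficient
  of degree \<open>k\<close>.\<close>
lemma sum_div_pderiv_prod_linear:
  fixes Z :: "complex set" and T :: "complex poly"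
  assumes fin: "finite Z" and card: "card Z = Suc k" and deg: "degree T \<le> k"
  shows "(\<Sum>z\<in>Z. poly T z / poly (pderiv (\<Prod>w\<in>Z. [:-w, 1:])) z) = coeff T k"
proof -
  define d where "d z = (\<Prod>w\<in>Z - {z}. z - w)" for z
  define M where "M z = (\<Prod>w\<in>Z - {z}. [:-w, 1::complex:])" for z
  have d_nonzero: "d z \<noteq> 0" if "z \<in> Z" for z
    using fin unfolding d_def by (subst prod_zero_iff) auto
  have degree_M: "degree (M z) = k" if "z \<in> Z" for z
    using that fin card unfolding M_def by (subst degree_prod_sum_eq) auto
  have coeff_M: "coeff (M z) k = 1" if "z \<in> Z" for z
    using lead_coeff_prod[of "\<lambda>w. [:-w, 1::complex:]" "Z - {z}"] degree_M[OF that]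
    unfolding M_def by simp
  have poly_M: "poly (M z) y = (if y = z then d z else 0)" if "z \<in> Z" "y \<in> Z" for z y
    using that fin unfolding M_def d_def poly_prod by (auto intro!: prod_zero)
  define L where "L = (\<Sum>z\<in>Z. smult (poly T z / d z) (M z))"
  have "L = T"
  proof (rule poly_eqI_degree[of Z])
    fix y assume y: "y \<in> Z"
    have "poly L y = (\<Sum>z\<in>Z. poly T z / d z * poly (M z) y)"
      unfolding L_def by (simp add: poly_sum)
    also have "\<dots> = poly T y / d y * poly (M y) y"
      using y fin by (subst sum.remove[of _ y]) (auto simp: poly_M split: if_splits intro!: sum.neutral)
    also have "\<dots> = poly T y"
      using y d_nonzero poly_M by simp
    finally show "poly L y = poly T y" .
  next
    have "degree L \<le> k"
      unfolding L_def using fin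
      by (intro degree_sum_le) (auto intro: order.trans[OF degree_smult_le] simp: degree_M)
    then show "degree L < card Z" using card by simp
  qed (use card deg in simp)
  then have "coeff T k = coeff L k" by simp
  also have "\<dots> = (\<Sum>z\<in>Z. poly T z / d z * coeff (M z) k)"
    unfolding L_def by (simp add: coeff_sum)
  also have "\<dots> = (\<Sum>z\<in>Z. poly T z / d z)"
    by (rule sum.cong) (auto simp: coeff_M)
  finally show ?thesis
    using poly_pderiv_prod_linear_at_root[OF fin] by (simp add: d_def)
qed

lemma card_roots_rsquarefree:
  fixes p :: "complex poly"
  assumes "rsquarefree p"
  shows "card {z. poly p z = 0} = degree p"
proof -
  have "p \<noteq> 0" using assms by (simp add: rsquarefree_def)
  then have "finite {z. poly p z = 0}" by (rule poly_roots_finite)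
  moreover have "degree p = degree (\<Prod>z | poly p z = 0. [:-z, 1:])"
    by (subst (1) complex_poly_decompose_rsquarefree[OF assms, symmetric])
       (use \<open>p \<noteq> 0\<close> in simp)
  ultimately show ?thesis by (simp add: degree_prod_sum_eq)
qed

lemma sum_roots_div_pderiv:
  fixes p T :: "complex poly"
  assumes sqf: "rsquarefree p" and deg: "degree T < degree p"
  shows "(\<Sum>z | poly p z = 0. poly T z / poly (pderiv p) z) = coeff T (degree p - 1) / lead_coeff p"
proof -
  define Z where "Z = {z. poly p z = 0}"
  have "p \<noteq> 0" using sqf by (simp add: rsquarefree_def)
  then have fin: "finite Z"
    unfolding Z_def by (rule poly_roots_finite)
  have card: "card Z = Suc (degree p - 1)"
    using card_roots_rsquarefree[OF sqf] deg unfolding Z_def by simp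
  have "pderiv p = smult (lead_coeff p) (pderiv (\<Prod>w\<in>Z. [:-w, 1:]))"
    by (subst (1) complex_poly_decompose_rsquarefree[OF sqf, symmetric])
       (simp add: Z_def pderiv_smult)
  then have "(\<Sum>z\<in>Z. poly T z / poly (pderiv p) z)
      = (\<Sum>z\<in>Z. poly T z / poly (pderiv (\<Prod>w\<in>Z. [:-w, 1:])) z) / lead_coeff p"
    by (simp add: sum_divide_distrib field_simps)
  also have "\<dots> = coeff T (degree p - 1) / lead_coeff p"
    using deg by (subst sum_div_pderiv_prod_linear[OF fin card]) auto
  finally show ?thesis by (simp add: Z_def)
qed

section \<open>Numerator and denominator of a Blaschke product\<close>

definition blaschke_num :: "complex list \<Rightarrow> complex poly" where
  "blaschke_num as = (\<Prod>a\<leftarrow>as. [:-a, 1:])"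

definition blaschke_den :: "complex list \<Rightarrow> complex poly" where
  "blaschke_den as = (\<Prod>a\<leftarrow>as. [:1, -cnj a:])"

lemma poly_blaschke_num: "poly (blaschke_num as) z = (\<Prod>a\<leftarrow>as. z - a)"
  unfolding blaschke_num_def by (induction as) (auto simp: algebra_simps)

lemma poly_blaschke_den: "poly (blaschke_den as) z = (\<Prod>a\<leftarrow>as. 1 - cnj a * z)"
  unfolding blaschke_den_def by (induction as) (auto simp: algebra_simps)

lemma blaschke_Cons: "blaschke \<alpha> (a # as) z = (z - a) / (1 - cnj a * z) * blaschke \<alpha> as z"
  by (simp add: blaschke_def)

lemma blaschke_eq_div:
  "blaschke \<alpha> as z = \<alpha> * poly (blaschke_num as) z / poly (blaschke_den as) z"
proof -
  have "(\<Prod>a\<leftarrow>as. (z - a) / (1 - cnj a * z)) = (\<Prod>a\<leftarrow>as. z - a) / (\<Prod>a\<leftarrow>as. 1 - cnj a * z)"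
    by (induction as) auto
  then show ?thesis
    by (simp add: blaschke_def poly_blaschke_num poly_blaschke_den)
qed

lemma degree_blaschke_num: "degree (blaschke_num as) = length as"
  and lead_coeff_blaschke_num: "lead_coeff (blaschke_num as) = 1"
  unfolding blaschke_num_def
proof (induction as)
  case (Cons a as)
  then have "(\<Prod>a\<leftarrow>as. [:-a, 1::complex:]) \<noteq> 0" by auto
  with Cons show "degree (\<Prod>a\<leftarrow>a # as. [:-a, 1:]) = length (a # as)"
    by (simp del: mult_pCons_left add: degree_mult_eq)
  from Cons show "lead_coeff (\<Prod>a\<leftarrow>a # as. [:-a, 1:]) = 1"
    by (simp only: list.map prod_list.Cons lead_coeff_mult) simp
qed simp_all

lemma degree_blaschke_den_le: "degree (blaschke_den as) \<le> length as"
  unfolding blaschke_den_def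
  by (rule order.trans[OF degree_prod_list_le]) (induction as, simp_all)

lemma poly_blaschke_den_0 [simp]: "poly (blaschke_den as) 0 = 1"
  by (induction as) (simp_all add: poly_blaschke_den)

lemma blaschke_factor_den_nonzero:
  assumes "norm a < 1" "norm z \<le> 1"
  shows "1 - cnj a * z \<noteq> 0"
proof
  assume "1 - cnj a * z = 0"
  then have "norm a * norm z = 1"
    by (metis complex_mod_cnj eq_iff_diff_eq_0 norm_mult norm_one)
  moreover have "norm a * norm z < 1"
    using assms mult_left_le[of "norm z" "norm a"] by simp
  ultimately show False by simp
qed

lemma blaschke_den_nonzero:
  assumes "\<forall>a\<in>set as. norm a < 1" "norm z \<le> 1"
  shows "poly (blaschke_den as) z \<noteq> 0"
  using assms blaschke_factor_den_nonzero by (induction as) (auto simp: poly_blaschke_den)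

section \<open>Modulus and logarithmic derivative of a Blaschke product\<close>

lemma norm_blaschke_factor_identity:
  "(norm (z - a))\<^sup>2 - (norm (1 - cnj a * z))\<^sup>2 = ((norm z)\<^sup>2 - 1) * (1 - (norm a)\<^sup>2)"
proof -
  have "complex_of_real ((norm (z - a))\<^sup>2 - (norm (1 - cnj a * z))\<^sup>2) =
        complex_of_real (((norm z)\<^sup>2 - 1) * (1 - (norm a)\<^sup>2))"
    by (simp only: of_real_diff of_real_mult of_real_1 complex_norm_square)
       (simp add: algebra_simps)
  then show ?thesis by (simp only: of_real_eq_iff)
qed

lemma norm_blaschke_factor_le_1:
  assumes "norm a < 1" "norm z \<le> 1"
  shows "norm ((z - a) / (1 - cnj a * z)) \<le> 1"
proof -
  have "(norm z)\<^sup>2 \<le> 1" "(norm a)\<^sup>2 < 1"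
    using assms by (simp_all add: power_le_one power_less_one_iff)
  then have "(norm (z - a))\<^sup>2 \<le> (norm (1 - cnj a * z))\<^sup>2"
    using norm_blaschke_factor_identity[of z a] by (smt (verit) mult_nonpos_nonneg)
  then show ?thesis
    by (simp add: norm_divide divide_le_eq_1 power2_le_iff_abs_le abs_le_square_iff)
qed

lemma norm_blaschke_factor_ge_1:
  assumes "norm a < 1" "1 \<le> norm z" "1 - cnj a * z \<noteq> 0"
  shows "1 \<le> norm ((z - a) / (1 - cnj a * z))"
proof -
  have "1 \<le> (norm z)\<^sup>2" "(norm a)\<^sup>2 < 1"
    using assms by (simp_all add: one_le_power power_less_one_iff)
  then have "(norm (1 - cnj a * z))\<^sup>2 \<le> (norm (z - a))\<^sup>2"
    using norm_blaschke_factor_identity[of z a] by (smt (verit) mult_nonneg_nonneg)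
  then show ?thesis
    using assms(3) by (simp add: norm_divide le_divide_eq_1 abs_le_square_iff)
qed

lemma norm_blaschke_le_1:
  assumes "norm \<alpha> = 1" "\<forall>a\<in>set as. norm a < 1" "norm z \<le> 1"
  shows "norm (blaschke \<alpha> as z) \<le> 1"
  using assms(2)
proof (induction as)
  case (Cons a as)
  have "norm (blaschke \<alpha> (a # as) z) = norm ((z - a) / (1 - cnj a * z)) * norm (blaschke \<alpha> as z)"
    by (simp only: blaschke_Cons norm_mult)
  with Cons show ?case
    using norm_blaschke_factor_le_1[of a z] assms(3) by (simp add: mult_le_one)
qed (simp add: blaschke_def assms(1))

lemma norm_blaschke_ge_1:
  assumes "norm \<alpha> = 1" "\<forall>a\<in>set as. norm a < 1" "1 \<le> norm z" "blaschke \<alpha> as z \<noteq> 0"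
  shows "1 \<le> norm (blaschke \<alpha> as z)"
  using assms(2,4)
proof (induction as)
  case (Cons a as)
  have "norm (blaschke \<alpha> (a # as) z) = norm ((z - a) / (1 - cnj a * z)) * norm (blaschke \<alpha> as z)"
    by (simp only: blaschke_Cons norm_mult)
  moreover have "blaschke \<alpha> as z \<noteq> 0" "1 - cnj a * z \<noteq> 0"
    using Cons.prems(2) by (auto simp: blaschke_Cons)
  then have "1 \<le> norm ((z - a) / (1 - cnj a * z))" "1 \<le> norm (blaschke \<alpha> as z)"
    using Cons norm_blaschke_factor_ge_1[of a z] assms(3) by auto
  ultimately show ?case
    using mult_mono[of 1 _ 1] by fastforce
qed (simp add: blaschke_def assms(1))

lemma blaschke_solution_on_circle:
  assumes "norm \<alpha> = 1" "\<forall>a\<in>set as. norm a < 1" "norm lam = 1"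
    and "z * blaschke \<alpha> as z = lam"
  shows "norm z = 1"
proof -
  have eq: "norm z * norm (blaschke \<alpha> as z) = 1"
    using assms(3,4) by (metis norm_mult)
  show ?thesis
  proof (rule linorder_cases[of "norm z" 1])
    assume "norm z < 1"
    then have "norm z * norm (blaschke \<alpha> as z) < 1"
      using norm_blaschke_le_1[OF assms(1,2)] by (smt (verit) mult_left_le norm_ge_zero)
    with eq show ?thesis by simp
  next
    assume "norm z > 1"
    moreover have "blaschke \<alpha> as z \<noteq> 0" using assms(3,4) by auto
    ultimately have "1 < norm z * norm (blaschke \<alpha> as z)"
      using norm_blaschke_ge_1[OF assms(1,2)] by (smt (verit) mult_le_cancel_left1)
    with eq show ?thesis by simp
  qed
qed

definition blaschke_log_deriv :: "complex list \<Rightarrow> complex \<Rightarrow> complex" where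
  "blaschke_log_deriv as z = (\<Sum>a\<leftarrow>as. (1 - cnj a * a) / ((z - a) * (1 - cnj a * z)))"

definition poisson_sum :: "complex list \<Rightarrow> complex \<Rightarrow> real" where
  "poisson_sum as z = (\<Sum>a\<leftarrow>as. (1 - (norm a)\<^sup>2) / (norm (z - a))\<^sup>2)"

lemma poisson_sum_nonneg: "\<forall>a\<in>set as. norm a \<le> 1 \<Longrightarrow> 0 \<le> poisson_sum as z"
  unfolding poisson_sum_def by (intro sum_list_nonneg) (auto simp: power_le_one)

lemma blaschke_has_field_derivative:
  assumes "\<forall>a\<in>set as. z \<noteq> a \<and> 1 - cnj a * z \<noteq> 0"
  shows "(blaschke \<alpha> as has_field_derivative blaschke \<alpha> as z * blaschke_log_deriv as z) (at z)"
  using assms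
proof (induction as)
  case Nil
  have "blaschke \<alpha> [] = (\<lambda>z. \<alpha>)" by (auto simp: blaschke_def)
  then show ?case by (simp add: blaschke_log_deriv_def)
next
  case (Cons a as)
  have nz: "z - a \<noteq> 0" "1 - cnj a * z \<noteq> 0" using Cons.prems by auto
  have "((\<lambda>w. (w - a) / (1 - cnj a * w)) has_field_derivative
           (1 - cnj a * a) / (1 - cnj a * z)\<^sup>2) (at z)"
    using nz by (auto intro!: derivative_eq_intros simp: field_simps power2_eq_square)
  moreover have "(blaschke \<alpha> as has_field_derivative blaschke \<alpha> as z * blaschke_log_deriv as z) (at z)"
    using Cons by simp
  ultimately have "((\<lambda>w. (w - a) / (1 - cnj a * w) * blaschke \<alpha> as w) has_field_derivative
     (z - a) / (1 - cnj a * z) * (blaschke \<alpha> as z * blaschke_log_deriv as z)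
     + (1 - cnj a * a) / (1 - cnj a * z)\<^sup>2 * blaschke \<alpha> as z) (at z)"
    by (rule DERIV_mult')
  moreover have "(z - a) / (1 - cnj a * z) * (blaschke \<alpha> as z * blaschke_log_deriv as z)
     + (1 - cnj a * a) / (1 - cnj a * z)\<^sup>2 * blaschke \<alpha> as z
     = blaschke \<alpha> (a # as) z * blaschke_log_deriv (a # as) z"
  proof -
    have "u / v * (b * l) + c / v\<^sup>2 * b = u / v * b * (c / (u * v) + l)"
      if "u \<noteq> 0" "v \<noteq> 0" for u v b l c :: complex
      using that by (simp add: field_simps power2_eq_square)
    from this[OF nz] show ?thesis
      by (simp add: blaschke_Cons blaschke_log_deriv_def)
  qed
  ultimately show ?case
    unfolding blaschke_Cons[abs_def] by (rule DERIV_cong)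
qed

lemma blaschke_log_deriv_on_circle:
  assumes "norm z = 1" "z \<notin> set as"
  shows "z * blaschke_log_deriv as z = of_real (poisson_sum as z)"
proof -
  have "z * ((1 - cnj a * a) / ((z - a) * (1 - cnj a * z)))
      = of_real ((1 - (norm a)\<^sup>2) / (norm (z - a))\<^sup>2)" if "a \<in> set as" for a
  proof -
    define w where "w = cnj (z - a)"
    have "z * cnj z = 1" using assms(1) complex_norm_square[of z] by simp
    then have "1 - cnj a * z = z * w" by (simp add: w_def algebra_simps)
    then have "z * ((1 - cnj a * a) / ((z - a) * (1 - cnj a * z)))
        = z * ((1 - cnj a * a) / ((z - a) * (z * w)))"
      by (simp only:)
    also have "\<dots> = (1 - cnj a * a) / ((z - a) * w)"
      using assms(1) by auto
    also have "\<dots> = of_real ((1 - (norm a)\<^sup>2) / (norm (z - a))\<^sup>2)"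
      using complex_norm_square[of a] complex_norm_square[of "z - a"]
      by (simp add: w_def mult.commute)
    finally show ?thesis .
  qed
  then show ?thesis
    unfolding blaschke_log_deriv_def poisson_sum_def
    by (induction as) (simp_all add: distrib_left)
qed

lemma norm_deriv_blaschke_on_circle:
  assumes "\<forall>a\<in>set as. norm a < 1" "norm z = 1" "norm (blaschke \<alpha> as z) = 1"
  shows "norm (deriv (blaschke \<alpha> as) z) = poisson_sum as z"
proof -
  have "\<forall>a\<in>set as. z \<noteq> a \<and> 1 - cnj a * z \<noteq> 0"
    using assms(1,2) blaschke_factor_den_nonzero by fastforce
  then have "deriv (blaschke \<alpha> as) z = blaschke \<alpha> as z * blaschke_log_deriv as z"
    by (intro DERIV_imp_deriv blaschke_has_field_derivative)
  then have "norm (deriv (blaschke \<alpha> as) z) = norm (z * blaschke_log_deriv as z)"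
    using assms(2,3) by (simp add: norm_mult)
  also have "\<dots> = poisson_sum as z"
    using assms(1,2) poisson_sum_nonneg[of as z]
    by (subst blaschke_log_deriv_on_circle) (auto simp: less_imp_le)
  finally show ?thesis .
qed

section \<open>The equation \<open>z B(z) = \<lambda>\<close>\<close>

definition blaschke_eqn_poly :: "complex \<Rightarrow> complex list \<Rightarrow> complex \<Rightarrow> complex poly" where
  "blaschke_eqn_poly \<alpha> as lam = smult \<alpha> (pCons 0 (blaschke_num as)) - smult lam (blaschke_den as)"

lemma poly_blaschke_eqn_poly:
  "poly (blaschke_eqn_poly \<alpha> as lam) z
     = \<alpha> * z * poly (blaschke_num as) z - lam * poly (blaschke_den as) z"
  by (simp add: blaschke_eqn_poly_def)

lemma degree_blaschke_eqn_poly: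
  assumes "\<alpha> \<noteq> 0"
  shows "degree (blaschke_eqn_poly \<alpha> as lam) = Suc (length as)"
proof -
  have num: "blaschke_num as \<noteq> 0"
    using lead_coeff_blaschke_num[of as] by auto
  then have "degree (smult lam (blaschke_den as)) < degree (smult \<alpha> (pCons 0 (blaschke_num as)))"
    using assms degree_blaschke_den_le[of as] degree_blaschke_num[of as]
    by (simp add: order.strict_trans2[OF _ degree_smult_le] le_imp_less_Suc)
  then show ?thesis
    using assms num degree_add_eq_left[of "- smult lam (blaschke_den as)"]
    by (simp add: blaschke_eqn_poly_def degree_blaschke_num)
qed

context
  fixes \<alpha> lam :: complex and as :: "complex list"
  assumes unimodular: "norm \<alpha> = 1" "norm lam = 1"
    and zeros_in_disc: "\<forall>a\<in>set as. norm a < 1"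
begin

lemma blaschke_den_nonzero_at_eqn_root:
  assumes "poly (blaschke_eqn_poly \<alpha> as lam) z = 0"
  shows "poly (blaschke_den as) z \<noteq> 0"
proof
  assume den: "poly (blaschke_den as) z = 0"
  then have "z \<noteq> 0" by auto
  moreover have "\<alpha> * z * poly (blaschke_num as) z = 0"
    using assms den by (simp add: poly_blaschke_eqn_poly)
  ultimately have "z \<in> set as"
    using unimodular by (auto simp: poly_blaschke_num prod_list_zero_iff)
  with den show False
    using blaschke_den_nonzero zeros_in_disc by fastforce
qed

lemma blaschke_solution_iff_eqn_root:
  "z * blaschke \<alpha> as z = lam \<longleftrightarrow> poly (blaschke_eqn_poly \<alpha> as lam) z = 0"
proof
  assume sol: "z * blaschke \<alpha> as z = lam"
  moreover from this have "poly (blaschke_den as) z \<noteq> 0"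
    using unimodular by (auto simp: blaschke_eq_div)
  ultimately show "poly (blaschke_eqn_poly \<alpha> as lam) z = 0"
    by (auto simp: blaschke_eq_div poly_blaschke_eqn_poly field_simps)
next
  assume root: "poly (blaschke_eqn_poly \<alpha> as lam) z = 0"
  with blaschke_den_nonzero_at_eqn_root show "z * blaschke \<alpha> as z = lam"
    by (auto simp: blaschke_eq_div poly_blaschke_eqn_poly field_simps)
qed

lemma pderiv_blaschke_eqn_poly_at_root:
  assumes root: "poly (blaschke_eqn_poly \<alpha> as lam) z = 0"
  shows "z * poly (pderiv (blaschke_eqn_poly \<alpha> as lam)) z
           = lam * poly (blaschke_den as) z * (1 + of_real (poisson_sum as z))"
proof -
  let ?B = "blaschke \<alpha> as" and ?Q = "poly (blaschke_den as)" and ?L = "blaschke_log_deriv as z"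
  have sol: "z * ?B z = lam"
    using root blaschke_solution_iff_eqn_root by simp
  have circle: "norm z = 1"
    using blaschke_solution_on_circle[OF unimodular(1) zeros_in_disc unimodular(2) sol] .
  have "\<forall>a\<in>set as. z \<noteq> a \<and> 1 - cnj a * z \<noteq> 0"
    using zeros_in_disc circle blaschke_factor_den_nonzero by fastforce
  then have "(?B has_field_derivative ?B z * ?L) (at z)"
    by (rule blaschke_has_field_derivative)
  then have "((\<lambda>w. ?Q w * (w * ?B w - lam)) has_field_derivative ?Q z * (?B z + z * (?B z * ?L))) (at z)"
    using sol by (auto intro!: derivative_eq_intros)
  then have "(poly (blaschke_eqn_poly \<alpha> as lam) has_field_derivative ?Q z * (?B z + z * (?B z * ?L))) (at z)"
  proof (rule has_field_derivative_transform_within_open)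
    show "open {w. ?Q w \<noteq> 0}"
      by (intro open_Collect_neq continuous_intros)
    show "z \<in> {w. ?Q w \<noteq> 0}"
      using root blaschke_den_nonzero_at_eqn_root by simp
    show "?Q w * (w * ?B w - lam) = poly (blaschke_eqn_poly \<alpha> as lam) w" if "w \<in> {w. ?Q w \<noteq> 0}" for w
      using that by (simp add: blaschke_eq_div poly_blaschke_eqn_poly field_simps)
  qed
  then have "poly (pderiv (blaschke_eqn_poly \<alpha> as lam)) z = ?Q z * (?B z + z * (?B z * ?L))"
    by (rule DERIV_unique[OF poly_DERIV])
  then have "z * poly (pderiv (blaschke_eqn_poly \<alpha> as lam)) z = ?Q z * (z * ?B z) * (1 + z * ?L)"
    by (simp add: algebra_simps)
  moreover have "z \<notin> set as"
    using zeros_in_disc circle by auto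
  ultimately show ?thesis
    using sol blaschke_log_deriv_on_circle[OF circle] by simp
qed

lemma blaschke_eqn_poly_simple_root:
  assumes "poly (blaschke_eqn_poly \<alpha> as lam) z = 0"
  shows "z * poly (pderiv (blaschke_eqn_poly \<alpha> as lam)) z \<noteq> 0"
proof -
  have "0 \<le> poisson_sum as z"
    using zeros_in_disc by (intro poisson_sum_nonneg) (auto simp: less_imp_le)
  then have "1 + complex_of_real (poisson_sum as z) \<noteq> 0"
    by (auto simp: complex_eq_iff)
  then show ?thesis
    using pderiv_blaschke_eqn_poly_at_root[OF assms] blaschke_den_nonzero_at_eqn_root[OF assms]
      unimodular by auto
qed

lemma rsquarefree_blaschke_eqn_poly: "rsquarefree (blaschke_eqn_poly \<alpha> as lam)"
  unfolding rsquarefree_roots using blaschke_eqn_poly_simple_root by fastforce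

text \<open>The residues of \<open>\<lambda>Q(z) / (z R(z))\<close> at the roots of \<open>z R(z)\<close> sum to zero: the one at
  \<open>0\<close> is \<open>-1\<close>, the one at a root \<open>w\<close> of \<open>R\<close> is \<open>1 / (1 + |B'(w)|)\<close>.\<close>
lemma sum_inverse_one_plus_poisson_sum:
  "(\<Sum>z | poly (blaschke_eqn_poly \<alpha> as lam) z = 0. 1 / (1 + poisson_sum as z)) = 1"
proof -
  define R where "R = blaschke_eqn_poly \<alpha> as lam"
  define p where "p = pCons 0 R"
  define T where "T = smult lam (blaschke_den as)"
  have R0: "poly R 0 = - lam"
    by (simp add: R_def poly_blaschke_eqn_poly)
  have nonzero: "lam \<noteq> 0" "\<alpha> \<noteq> 0"
    using unimodular by auto
  have poly_p: "poly p z = z * poly R z" for z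
    by (simp add: p_def)
  have pderiv_p: "poly (pderiv p) z = poly R z + z * poly (pderiv R) z" for z
    by (simp add: p_def pderiv_pCons)
  have roots_p: "{z. poly p z = 0} = insert 0 {z. poly R z = 0}"
    by (auto simp: poly_p)
  have fin: "finite {z. poly R z = 0}" and zero_not_root: "0 \<notin> {z. poly R z = 0}"
    using R0 nonzero by (auto intro!: poly_roots_finite)
  have sqf: "rsquarefree p"
    unfolding rsquarefree_roots
    using R0 nonzero blaschke_eqn_poly_simple_root[folded R_def] by (auto simp: poly_p pderiv_p)
  have degree_p: "degree p = Suc (Suc (length as))"
    using R0 nonzero degree_blaschke_eqn_poly by (auto simp: p_def R_def)
  have degree_T: "degree T \<le> length as"
    using degree_blaschke_den_le[of as] by (simp add: T_def)
  have "-1 + (\<Sum>z | poly R z = 0. poly T z / poly (pderiv p) z)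
      = (\<Sum>z | poly p z = 0. poly T z / poly (pderiv p) z)"
    using fin zero_not_root R0 nonzero by (simp add: roots_p pderiv_p T_def)
  also have "\<dots> = coeff T (degree p - 1) / lead_coeff p"
    using degree_T degree_p by (intro sum_roots_div_pderiv sqf) simp
  also have "\<dots> = 0"
    using degree_T degree_p by (simp add: coeff_eq_0)
  finally have "(\<Sum>z | poly R z = 0. poly T z / poly (pderiv p) z) = 1"
    by simp
  moreover have "poly T z / poly (pderiv p) z = of_real (1 / (1 + poisson_sum as z))"
    if "poly R z = 0" for z
    using that pderiv_blaschke_eqn_poly_at_root blaschke_den_nonzero_at_eqn_root nonzero
    by (simp add: R_def T_def pderiv_p)
  ultimately have "of_real (\<Sum>z | poly R z = 0. 1 / (1 + poisson_sum as z)) = (1 :: complex)"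
    by (simp add: of_real_sum)
  then show ?thesis
    unfolding R_def of_real_eq_1_iff .
qed

end

theorem mainTheorem6:
  fixes \<alpha> lam :: complex and as :: "complex list" and n :: nat
  assumes "norm \<alpha> = 1"
    and "\<forall>a\<in>set as. norm a < 1"
    and "length as = n" and "n \<ge> 1"
    and "norm lam = 1"
  shows "card {z. z * blaschke \<alpha> as z = lam} = n + 1
     \<and> {z. z * blaschke \<alpha> as z = lam} \<subseteq> sphere 0 1
     \<and> (\<Sum>z\<in>{z. z * blaschke \<alpha> as z = lam}.
          1 / (norm (deriv (blaschke \<alpha> as) z) + 1)) = 1"
proof -
  have alpha: "\<alpha> \<noteq> 0"
    using assms(1) by auto
  have solutions: "{z. z * blaschke \<alpha> as z = lam} = {z. poly (blaschke_eqn_poly \<alpha> as lam) z = 0}"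
    using blaschke_solution_iff_eqn_root[OF assms(1,5,2)] by blast
  have on_circle: "norm z = 1" if "z * blaschke \<alpha> as z = lam" for z
    using blaschke_solution_on_circle[OF assms(1,2,5) that] .
  have "norm (deriv (blaschke \<alpha> as) z) = poisson_sum as z" if "z * blaschke \<alpha> as z = lam" for z
    using norm_deriv_blaschke_on_circle[OF assms(2) on_circle[OF that]] that on_circle[OF that] assms(5)
    by (metis mult_cancel_right1 norm_mult)
  then have "(\<Sum>z\<in>{z. z * blaschke \<alpha> as z = lam}. 1 / (norm (deriv (blaschke \<alpha> as) z) + 1))
      = (\<Sum>z\<in>{z. z * blaschke \<alpha> as z = lam}. 1 / (1 + poisson_sum as z))"
    by (intro sum.cong) (auto simp: add.commute)
  also have "\<dots> = 1"
    unfolding solutions by (rule sum_inverse_one_plus_poisson_sum[OF assms(1,5,2)])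
  finally have "(\<Sum>z\<in>{z. z * blaschke \<alpha> as z = lam}. 1 / (norm (deriv (blaschke \<alpha> as) z) + 1)) = 1" .
  moreover have "card {z. z * blaschke \<alpha> as z = lam} = n + 1"
    using assms(3) rsquarefree_blaschke_eqn_poly[OF assms(1,5,2)] degree_blaschke_eqn_poly[OF alpha]
    by (simp add: solutions card_roots_rsquarefree)
  ultimately show ?thesis
    using on_circle by auto
qed

end
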